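(* In any execution of the algorithm $\mathcal{A}$ described in the context, for any two processes $p_i$ and $p_j$, if $p_i$ writes a set $S_i$ to $Set[i]$ and $p_j$ writes a set $S_j$ to $Set[j]$, then $S_i\subseteq S_j$ or $S_j\subseteq S_i$.
   Context: Algorithm $\mathcal{A}$ (a safe agreement algorithm for processes $p_0,\dots,p_{m-1}$, each invoking $propose$ at most once). Shared single-writer registers, for $0\le i<m$, written only by $p_i$: $Val[i]$ (initially $\bot$), $Id[i]$ (initially $\bot$), $Set[i]$ (initially $\emptyset$). $propose(v)$ at $p_i$: write $Val[i]\gets v$; write $Id[i]\gets i$; repeat { read $Id[0],\dots,Id[m-1]$ in order into $collect1$; read $Id[0],\dots,Id[m-1]$ in order into $collect2$ } until $collect1=collect2$ componentwise; then write $Set[i]\gets\{j: collect1[j]\neq\bot\}$. $resolve()$ at $p_i$: read $Set[0],\dots,Set[m-1]$, let $C$ be the smallest non-empty set read; if for every $j\in C$ the value read from $Set[j]$ is non-empty and contains $C$, return $Val[\min C]$, else return $\bot$. Reads and writes of registers are atomic. *)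

theory Defs
  imports Main
begin

text \<open>Bottom is modelled by None.  Each process is a sequential state machine whose
  transitions are single atomic register operations (the invocation and the
  local decision of resolve are register-free steps).\<close>

datatype 'v lstate =
    Idle                                  \<comment> \<open>propose not yet invoked, no operation pending\<close>
  | PWVal 'v                              \<comment> \<open>propose(v) invoked, next: write Val[i]\<close>
  | PWId                                  \<comment> \<open>next: write Id[i]\<close>
  | PR1 "nat option list"                 \<comment> \<open>reading Id[.] into collect1 (partial)\<close>
  | PR2 "nat option list" "nat option list" \<comment> \<open>collect1 complete, reading collect2\<close>
  | PWSet "nat set"                       \<comment> \<open>next: write Set[i]\<close>
  | Done                                  \<comment> \<open>propose completed, no operation pending\<close>
  | RRd bool "nat set list"               \<comment> \<open>resolve: reading Set[.]; flag = propose completed before\<close>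
  | RDec bool "nat set list"              \<comment> \<open>resolve: all Set registers read, deciding\<close>
  | RRdVal bool nat                       \<comment> \<open>resolve: next read Val[k] and return it\<close>

datatype 'v act =
    InvPropose 'v | WrVal 'v | WrId | RdId nat "nat option" | WrSet "nat set"
  | InvResolve | RdSet nat "nat set" | RdVal nat "'v option" | RespResolve "'v option"

record 'v conf =
  ValR :: "nat \<Rightarrow> 'v option"
  IdR  :: "nat \<Rightarrow> nat option"
  SetR :: "nat \<Rightarrow> nat set"
  loc  :: "nat \<Rightarrow> 'v lstate"

definition init_conf :: "'v conf" where
  "init_conf = \<lparr>ValR = (\<lambda>_. None), IdR = (\<lambda>_. None), SetR = (\<lambda>_. {}), loc = (\<lambda>_. Idle)\<rparr>"

definition smallest_nonempty :: "nat set list \<Rightarrow> nat set" where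
  "smallest_nonempty ss = (SOME C. C \<in> set ss \<and> C \<noteq> {} \<and>
       (\<forall>D\<in>set ss. D \<noteq> {} \<longrightarrow> card C \<le> card D))"

definition resolve_ok :: "nat set list \<Rightarrow> bool" where
  "resolve_ok ss = ((\<exists>D\<in>set ss. D \<noteq> {}) \<and>
      (let C = smallest_nonempty ss in
         \<forall>j\<in>C. j < length ss \<and> ss ! j \<noteq> {} \<and> C \<subseteq> ss ! j))"

definition return_state :: "bool \<Rightarrow> 'v lstate" where
  "return_state b = (if b then Done else Idle)"

definition setloc :: "'v conf \<Rightarrow> nat \<Rightarrow> 'v lstate \<Rightarrow> 'v conf" where
  "setloc c i s = c\<lparr>loc := (loc c)(i := s)\<rparr>"

inductive step :: "nat \<Rightarrow> nat \<Rightarrow> 'v conf \<Rightarrow> 'v act \<Rightarrow> 'v conf \<Rightarrow> bool"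
  for m :: nat where
  inv_prop: "loc c i = Idle \<Longrightarrow> step m i c (InvPropose v) (setloc c i (PWVal v))"
| wr_val: "loc c i = PWVal v \<Longrightarrow>
     step m i c (WrVal v) (setloc (c\<lparr>ValR := (ValR c)(i := Some v)\<rparr>) i PWId)"
| wr_id: "loc c i = PWId \<Longrightarrow>
     step m i c WrId (setloc (c\<lparr>IdR := (IdR c)(i := Some i)\<rparr>) i (PR1 []))"
| rd1: "loc c i = PR1 c1 \<Longrightarrow> length c1 < m \<Longrightarrow> x = IdR c (length c1) \<Longrightarrow>
     step m i c (RdId (length c1) x)
       (setloc c i (if length (c1 @ [x]) = m then PR2 (c1 @ [x]) [] else PR1 (c1 @ [x])))"
| rd2: "loc c i = PR2 c1 c2 \<Longrightarrow> length c2 < m \<Longrightarrow> x = IdR c (length c2) \<Longrightarrow>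
     step m i c (RdId (length c2) x)
       (setloc c i (if length (c2 @ [x]) = m
                    then (if c1 = c2 @ [x] then PWSet {j. j < m \<and> c1 ! j \<noteq> None} else PR1 [])
                    else PR2 c1 (c2 @ [x])))"
| wr_set: "loc c i = PWSet S \<Longrightarrow>
     step m i c (WrSet S) (setloc (c\<lparr>SetR := (SetR c)(i := S)\<rparr>) i Done)"
| inv_res: "loc c i = Idle \<or> loc c i = Done \<Longrightarrow>
     step m i c InvResolve (setloc c i (RRd (loc c i = Done) []))"
| rd_set: "loc c i = RRd b ss \<Longrightarrow> length ss < m \<Longrightarrow> S = SetR c (length ss) \<Longrightarrow>
     step m i c (RdSet (length ss) S)
       (setloc c i (if length (ss @ [S]) = m then RDec b (ss @ [S]) else RRd b (ss @ [S])))"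
| dec_ok: "loc c i = RDec b ss \<Longrightarrow> resolve_ok ss \<Longrightarrow>
     step m i c (RdVal (Min (smallest_nonempty ss)) (ValR c (Min (smallest_nonempty ss))))
       (setloc c i (RRdVal b (Min (smallest_nonempty ss))))"
| dec_fail: "loc c i = RDec b ss \<Longrightarrow> \<not> resolve_ok ss \<Longrightarrow>
     step m i c (RespResolve None) (setloc c i (return_state b))"
| rd_val: "loc c i = RRdVal b k \<Longrightarrow>
     step m i c (RespResolve (ValR c k)) (setloc c i (return_state b))"

inductive execution :: "nat \<Rightarrow> (nat \<times> 'v act) list \<Rightarrow> 'v conf \<Rightarrow> bool" for m :: nat where
  exec_init: "execution m [] init_conf"
| exec_step: "execution m tr c \<Longrightarrow> i < m \<Longrightarrow> step m i c a c' \<Longrightarrow>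
     execution m (tr @ [(i, a)]) c'"

end

theory Submission
  imports Defs
begin

text \<open>An Id register, once written, is never reset, so the set of registered processes only grows
  and all of its past values form a chain.  A double collect that returns the same vector twice
  equals the registered set at the moment its first collect ended: an entry seen in the first
  collect was registered by then, and an entry still unset in the second collect was not.  Hence
  every value written to a Set register is one of these snapshots.\<close>

definition registered :: "nat \<Rightarrow> 'v conf \<Rightarrow> nat set" where
  "registered m c = {k. k < m \<and> IdR c k \<noteq> None}"

lemma step_IdR_stable: "step m i c a c' \<Longrightarrow> IdR c k \<noteq> None \<Longrightarrow> IdR c' k \<noteq> None"
  by (induction rule: step.induct) (auto simp: setloc_def)

lemma step_registered_mono: "step m i c a c' \<Longrightarrow> registered m c \<subseteq> registered m c'"
  by (auto simp: registered_def dest: step_IdR_stable)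

lemma step_loc_other: "step m i c a c' \<Longrightarrow> p \<noteq> i \<Longrightarrow> loc c' p = loc c p"
  by (induction rule: step.induct) (auto simp: setloc_def)

text \<open>How a pending propose is related to the snapshot history \<open>H\<close>: in the second collect
  there is a snapshot containing everything seen in the first collect and nothing found unset
  so far in the second one.\<close>

fun consistent_loc :: "nat \<Rightarrow> nat set set \<Rightarrow> 'v conf \<Rightarrow> 'v lstate \<Rightarrow> bool" where
  "consistent_loc m H c (PR1 c1) =
     (length c1 \<le> m \<and> (\<forall>k<length c1. c1 ! k \<noteq> None \<longrightarrow> IdR c k \<noteq> None))"
| "consistent_loc m H c (PR2 c1 c2) = (length c1 = m \<and>
     (\<exists>X\<in>H. (\<forall>k<m. c1 ! k \<noteq> None \<longrightarrow> k \<in> X) \<and> (\<forall>k<length c2. c2 ! k = None \<longrightarrow> k \<notin> X)))"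
| "consistent_loc m H c (PWSet S) = (S \<in> H)"
| "consistent_loc m H c _ = True"

lemma consistent_loc_mono:
  assumes "consistent_loc m H c s" "H \<subseteq> H'" "\<And>k. IdR c k \<noteq> None \<Longrightarrow> IdR c' k \<noteq> None"
  shows "consistent_loc m H' c' s"
  using assms by (cases s) auto

definition snapshot_inv :: "nat \<Rightarrow> nat set set \<Rightarrow> (nat \<times> 'v act) list \<Rightarrow> 'v conf \<Rightarrow> bool" where
  "snapshot_inv m H tr c \<longleftrightarrow>
     chain\<^sub>\<subseteq> H \<and> (\<forall>X\<in>H. X \<subseteq> registered m c) \<and>
     (\<forall>p S. (p, WrSet S) \<in> set tr \<longrightarrow> S \<in> H) \<and> (\<forall>p. consistent_loc m H c (loc c p))"

lemma step_consistent_loc: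
  assumes st: "step m i c a c'"
    and cons: "consistent_loc m H c (loc c i)"
    and sub: "\<forall>X\<in>H. X \<subseteq> registered m c"
  shows "consistent_loc m (insert (registered m c) H) c' (loc c' i)"
  using st
proof cases
  case (rd1 c1 x)
  have "\<forall>k<length (c1 @ [x]). (c1 @ [x]) ! k \<noteq> None \<longrightarrow> IdR c k \<noteq> None"
    using cons rd1 by (auto simp: nth_append less_Suc_eq)
  then show ?thesis
    using cons rd1 by (auto simp: setloc_def registered_def)
next
  case (rd2 c1 c2 x)
  obtain X where X: "X \<in> H" "\<forall>k<m. c1 ! k \<noteq> None \<longrightarrow> k \<in> X"
      "\<forall>k<length c2. c2 ! k = None \<longrightarrow> k \<notin> X" and len: "length c1 = m"
    using cons rd2 by auto
  have X_reg: "X \<subseteq> registered m c"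
    using sub X(1) by blast
  have unset: "\<forall>k<length (c2 @ [x]). (c2 @ [x]) ! k = None \<longrightarrow> k \<notin> X"
    using X(3) X_reg rd2 by (auto simp: nth_append registered_def less_Suc_eq)
  consider "length (c2 @ [x]) = m" "c1 = c2 @ [x]" | "length (c2 @ [x]) = m" "c1 \<noteq> c2 @ [x]"
    | "length (c2 @ [x]) \<noteq> m"
    by blast
  then show ?thesis
  proof cases
    case 1
    then have "{j. j < m \<and> c1 ! j \<noteq> None} = X"
      using X(2) X_reg unset by (auto simp: registered_def)
    then show ?thesis
      using rd2 1 X(1) by (simp add: setloc_def)
  next
    case 2
    then show ?thesis
      using rd2 by (simp add: setloc_def)
  next
    case 3
    then show ?thesis
      using rd2 X(1,2) unset len by (auto simp: setloc_def)
  qed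
qed (use cons in \<open>simp_all add: setloc_def return_state_def\<close>)

text \<open>The current registered set is recorded as a snapshot at every step, not only when a first
  collect ends; this is harmless since it contains all earlier snapshots.\<close>

lemma snapshot_inv_step:
  assumes inv: "snapshot_inv m H tr c" and st: "step m i c a c'"
  shows "snapshot_inv m (insert (registered m c) H) (tr @ [(i, a)]) c'"
proof -
  let ?H' = "insert (registered m c) H"
  have sub: "\<forall>X\<in>H. X \<subseteq> registered m c" and cons: "\<And>p. consistent_loc m H c (loc c p)"
    using inv by (auto simp: snapshot_inv_def)
  have "chain\<^sub>\<subseteq> ?H'"
    using inv sub by (auto simp: snapshot_inv_def chain_subset_def)
  moreover have "\<forall>X\<in>?H'. X \<subseteq> registered m c'"
    using sub step_registered_mono[OF st] by blast
  moreover have "S \<in> ?H'" if "a = WrSet S" for S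
    using st cons[of i] that by cases (auto simp: setloc_def)
  moreover have "consistent_loc m ?H' c' (loc c' p)" for p
  proof (cases "p = i")
    case True
    then show ?thesis
      using step_consistent_loc[OF st cons sub] by simp
  next
    case False
    then show ?thesis
      using consistent_loc_mono[OF cons subset_insertI step_IdR_stable[OF st]]
        step_loc_other[OF st] by simp
  qed
  ultimately show ?thesis
    using inv by (auto simp: snapshot_inv_def)
qed

lemma execution_snapshot_inv: "execution m tr c \<Longrightarrow> \<exists>H. snapshot_inv m H tr c"
proof (induction rule: execution.induct)
  case exec_init
  show ?case
    by (rule exI[of _ "{}"]) (simp add: snapshot_inv_def init_conf_def chain_subset_def)
next
  case (exec_step tr c i a c')
  then show ?case
    using snapshot_inv_step by blast
qed

theorem lemma6:
  fixes m :: nat and tr :: "(nat \<times> 'v act) list" and c :: "'v conf"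
  assumes "execution m tr c"
    and "(i, WrSet Si) \<in> set tr"
    and "(j, WrSet Sj) \<in> set tr"
  shows "Si \<subseteq> Sj \<or> Sj \<subseteq> Si"
proof -
  obtain H where "snapshot_inv m H tr c"
    using execution_snapshot_inv[OF assms(1)] by blast
  then have "chain\<^sub>\<subseteq> H" "Si \<in> H" "Sj \<in> H"
    using assms(2,3) by (auto simp: snapshot_inv_def)
  then show ?thesis
    by (simp add: chain_subset_def)
qed

end
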